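(* For $n\ge1$ and $0\le k\le n-1$, the number of plane trees with $n$ edges and exactly $k$ young leaves is $$\binom{n-1}{k}M_{n-k-1},$$ where $M_m=\sum_{r=0}^{\lfloor m/2\rfloor}\binom{m}{2r}C_r$ is the $m$-th Motzkin number and $C_r=\frac{1}{r+1}\binom{2r}{r}$ is the $r$-th Catalan number.
   Context: A plane tree is a rooted tree in which the children of each vertex are linearly ordered (left to right). A leaf is a vertex with no children; by convention the tree consisting of a single vertex (no edges) has no leaves. A leaf is an old leaf if it is the leftmost child of its parent, and a young leaf otherwise. The Motzkin number $M_m$ equals the number of lattice paths from $(0,0)$ to $(m,0)$ with steps $(1,1),(1,-1),(1,0)$ never going below the $x$-axis. *)

theory Defs
  imports Main
begin

datatype ptree = Node "ptree list"

fun edges :: "ptree \<Rightarrow> nat" where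
  "edges (Node ts) = (\<Sum>t\<leftarrow>ts. Suc (edges t))"

fun is_leaf :: "ptree \<Rightarrow> bool" where
  "is_leaf (Node ts) = (ts = [])"

text \<open>Number of young leaves: children that are leaves and are not the leftmost
  child of their parent (i.e. sit at position >= 1 in the children list).\<close>
fun young_leaves :: "ptree \<Rightarrow> nat" where
  "young_leaves (Node ts) =
     length (filter is_leaf (drop 1 ts)) + (\<Sum>t\<leftarrow>ts. young_leaves t)"

definition catalan :: "nat \<Rightarrow> nat" where
  "catalan r = ((2 * r) choose r) div (r + 1)"

definition motzkin :: "nat \<Rightarrow> nat" where
  "motzkin m = (\<Sum>r = 0..m div 2. (m choose (2 * r)) * catalan r)"

end

theory Submission
  imports Defs
begin

(* Let F(m, N, k) count the lists of m non-leaf plane trees with N edges and k young leaves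
   in total.  Removing the last edge at the root of the first tree is a bijection onto four
   smaller families: if the root has a single child, the edge is deleted (the tree was a single
   edge) or contracted; otherwise the last child is either a leaf, deleted together with one
   young leaf, or a non-leaf subtree, which is cut off and becomes a tree of its own.  Hence
     F(m+1, N+1, k) = F(m, N, k) + F(m+1, N, k) + F(m+1, N, k-1) + F(m+2, N, k),
   which is also satisfied by binom(N-1, k) P(N-1-k, m-1), where P(L, h) counts Motzkin paths
   of length L from height 0 to height h.  So single trees with n edges are counted by
   binom(n-1, k) P(n-1-k, 0).  Finally P(L, 0) = M_L: choosing the 2r non-level steps leaves
   a Dyck path of length 2r, and these are counted by the ballot number
   binom(2r, r) - binom(2r, r-1) = C_r. *)

fun dyck_paths :: "nat \<Rightarrow> nat \<Rightarrow> nat" where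
  "dyck_paths 0 h = (if h = 0 then 1 else 0)"
| "dyck_paths (Suc p) h = (if h = 0 then 0 else dyck_paths p (h - 1)) + dyck_paths p (Suc h)"

lemma dyck_paths_eq_0_if_less: "p < h \<Longrightarrow> dyck_paths p h = 0"
  by (induction p arbitrary: h) auto

lemma dyck_paths_eq_0_if_odd: "odd (p + h) \<Longrightarrow> dyck_paths p h = 0"
  by (induction p arbitrary: h) (auto simp: odd_pos)

definition ballot_number :: "nat \<Rightarrow> nat \<Rightarrow> int" where
  "ballot_number p b = int (p choose b) - (if b = 0 then 0 else int (p choose (b - 1)))"

lemma ballot_number_0 [simp]: "ballot_number p 0 = 1"
  by (simp add: ballot_number_def)

lemma ballot_number_Suc_Suc:
  "ballot_number (Suc p) (Suc b) = ballot_number p (Suc b) + ballot_number p b"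
  by (cases b) (simp_all add: ballot_number_def)

lemma ballot_number_middle: "ballot_number (Suc (2 * b)) (Suc b) = 0"
  using binomial_symmetric[of b "Suc (2 * b)"] by (simp add: ballot_number_def)

lemma dyck_paths_ballot_number:
  "int (dyck_paths (2 * b + h) h) = ballot_number (2 * b + h) b"
proof (induction "2 * b + h" arbitrary: b h)
  case 0
  then show ?case by simp
next
  case (Suc p)
  show ?case
  proof (cases h)
    case 0
    then obtain s where b: "b = Suc s" and p: "p = 2 * s + 1"
      using Suc.hyps by (cases b) auto
    have "int (dyck_paths p 1) = ballot_number p s"
      using Suc.hyps(1)[of s 1] p by simp
    then show ?thesis
      using p b 0 ballot_number_middle[of s] Suc.hyps(2)
      by (simp add: ballot_number_Suc_Suc)
  next
    case (Suc h')
    show ?thesis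
    proof (cases b)
      case 0
      have "dyck_paths p (Suc h) = 0"
        using Suc.hyps(2) \<open>b = 0\<close> by (simp add: dyck_paths_eq_0_if_less)
      then show ?thesis
        using Suc.hyps(1)[of 0 h'] Suc.hyps(2) \<open>b = 0\<close> \<open>h = Suc h'\<close> by simp
    next
      case (Suc b')
      have "int (dyck_paths p h') = ballot_number p b"
        using Suc.hyps(1)[of b h'] Suc.hyps(2) \<open>h = Suc h'\<close> by simp
      moreover have "int (dyck_paths p (Suc h)) = ballot_number p b'"
        using Suc.hyps(1)[of b' "Suc h"] Suc.hyps(2) \<open>b = Suc b'\<close> by simp
      ultimately show ?thesis
        using Suc.hyps(2) \<open>b = Suc b'\<close> \<open>h = Suc h'\<close> by (simp add: ballot_number_Suc_Suc)
    qed
  qed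
qed

lemma dyck_paths_catalan: "dyck_paths (2 * r) 0 = catalan r"
proof -
  have times: "(r + 1) * dyck_paths (2 * r) 0 = (2 * r) choose r"
  proof (cases r)
    case 0
    then show ?thesis by simp
  next
    case (Suc s)
    define A where "A = (2 * r) choose r"
    define B where "B = (2 * r) choose s"
    have D: "int (dyck_paths (2 * r) 0) = int A - int B"
      using dyck_paths_ballot_number[of r 0] Suc by (simp add: ballot_number_def A_def B_def)
    have "(s + 2) * B = r * A"
    proof -
      have "Suc (s + Suc s) = 2 * r" using Suc by simp
      from Suc_times_binomial_add[of s "Suc s", unfolded this]
      show ?thesis unfolding A_def B_def \<open>r = Suc s\<close> by (simp only: add_2_eq_Suc')
    qed
    then have AB: "(int s + 2) * int B = int r * int A"
      by (metis of_nat_add of_nat_mult of_nat_numeral)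
    have "int ((r + 1) * dyck_paths (2 * r) 0) = (int s + 2) * (int A - int B)"
      unfolding of_nat_mult D using Suc by simp
    also have "\<dots> = int A"
      using AB Suc by (simp add: algebra_simps)
    finally have "int ((r + 1) * dyck_paths (2 * r) 0) = int A" .
    then show ?thesis unfolding A_def by (simp only: of_nat_eq_iff)
  qed
  show ?thesis
    unfolding catalan_def times[symmetric] by (rule nonzero_mult_div_cancel_left[symmetric]) simp
qed

fun motzkin_paths :: "nat \<Rightarrow> nat \<Rightarrow> nat" where
  "motzkin_paths 0 h = (if h = 0 then 1 else 0)"
| "motzkin_paths (Suc L) h =
     (if h = 0 then 0 else motzkin_paths L (h - 1)) + motzkin_paths L (Suc h) + motzkin_paths L h"

lemma motzkin_paths_eq_sum_dyck_paths:
  "motzkin_paths L h = (\<Sum>p\<le>L. (L choose p) * dyck_paths p h)"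
proof (induction L arbitrary: h)
  case 0
  then show ?case by simp
next
  case (Suc L)
  have "dyck_paths 0 h + (\<Sum>p\<le>L. (L choose Suc p) * dyck_paths (Suc p) h)
      = (\<Sum>p\<le>Suc L. (L choose p) * dyck_paths p h)"
    by (simp only: sum.atMost_Suc_shift) (simp del: dyck_paths.simps)
  also have "\<dots> = motzkin_paths L h"
    using Suc.IH by simp
  finally have shifted:
    "dyck_paths 0 h + (\<Sum>p\<le>L. (L choose Suc p) * dyck_paths (Suc p) h) = motzkin_paths L h" .
  have "(\<Sum>p\<le>Suc L. (Suc L choose p) * dyck_paths p h)
      = (\<Sum>p\<le>L. (L choose p) * dyck_paths (Suc p) h)
          + (dyck_paths 0 h + (\<Sum>p\<le>L. (L choose Suc p) * dyck_paths (Suc p) h))"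
    by (simp only: sum.atMost_Suc_shift binomial_Suc_Suc add_mult_distrib sum.distrib)
      (simp del: dyck_paths.simps)
  also have "\<dots> = motzkin_paths (Suc L) h"
    unfolding shifted using Suc.IH by (simp add: sum.distrib sum_distrib_left algebra_simps)
  finally show ?case ..
qed

lemma motzkin_paths_motzkin: "motzkin_paths m 0 = motzkin m"
proof -
  have "motzkin_paths m 0 = (\<Sum>p\<in>(\<lambda>r. 2 * r) ` {0..m div 2}. (m choose p) * dyck_paths p 0)"
    unfolding motzkin_paths_eq_sum_dyck_paths
  proof (rule sum.mono_neutral_right)
    show "\<forall>p\<in>{..m} - (\<lambda>r. 2 * r) ` {0..m div 2}. (m choose p) * dyck_paths p 0 = 0"
    proof
      fix p assume p: "p \<in> {..m} - (\<lambda>r. 2 * r) ` {0..m div 2}"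
      have "odd p"
      proof
        assume "even p"
        then have "p = 2 * (p div 2) \<and> p div 2 \<in> {0..m div 2}"
          using p by (auto intro: div_le_mono)
        then show False using p by blast
      qed
      then show "(m choose p) * dyck_paths p 0 = 0" by (simp add: dyck_paths_eq_0_if_odd)
    qed
  qed auto
  also have "\<dots> = motzkin m"
    unfolding motzkin_def by (simp add: sum.reindex inj_on_def dyck_paths_catalan)
  finally show ?thesis .
qed

lemma length_le_edges: "length ts \<le> edges (Node ts)"
  by (induction ts) auto

lemma edges_child_less: "t \<in> set ts \<Longrightarrow> edges t < edges (Node ts)"
  using member_le_sum_list[of "Suc (edges t)" "map (\<lambda>t. Suc (edges t)) ts"] by auto

lemma edges_pos_if_not_leaf: "\<not> is_leaf t \<Longrightarrow> 0 < edges t"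
  by (cases t) (auto simp: neq_Nil_conv)

lemma finite_edges_less: "finite {t. edges t < n}"
proof (induction n)
  case 0
  then show ?case by simp
next
  case (Suc n)
  have "{t. edges t < Suc n} \<subseteq> Node ` {ts. set ts \<subseteq> {t. edges t < n} \<and> length ts \<le> n}"
  proof
    fix t assume "t \<in> {t. edges t < Suc n}"
    then have "edges t \<le> n" by simp
    obtain ts where t: "t = Node ts" by (cases t)
    have "edges c < n" if "c \<in> set ts" for c
      using edges_child_less[OF that] \<open>edges t \<le> n\<close> unfolding t by (rule order.strict_trans2)
    moreover have "length ts \<le> n"
      using length_le_edges[of ts] \<open>edges t \<le> n\<close> unfolding t by (rule order.trans)
    ultimately show "t \<in> Node ` {ts. set ts \<subseteq> {t. edges t < n} \<and> length ts \<le> n}"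
      unfolding t by blast
  qed
  then show ?case
    by (rule finite_subset) (rule finite_imageI[OF finite_lists_length_le[OF Suc.IH]])
qed

definition forests :: "nat \<Rightarrow> nat \<Rightarrow> nat \<Rightarrow> ptree list set" where
  "forests m N k = {ts. length ts = m \<and> (\<forall>t\<in>set ts. \<not> is_leaf t)
     \<and> (\<Sum>t\<leftarrow>ts. edges t) = N \<and> (\<Sum>t\<leftarrow>ts. young_leaves t) = k}"

lemma finite_forests: "finite (forests m N k)"
proof (rule finite_subset)
  have "edges t < Suc N" if "ts \<in> forests m N k" "t \<in> set ts" for t ts
    using that member_le_sum_list[of "edges t" "map edges ts"] by (simp add: forests_def)
  then show "forests m N k \<subseteq> {ts. set ts \<subseteq> {t. edges t < Suc N} \<and> length ts \<le> m}"
    by (auto simp: forests_def)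
  show "finite \<dots>"
    by (rule finite_lists_length_le[OF finite_edges_less])
qed

lemma forests_0_edges: "forests m 0 k = (if m = 0 \<and> k = 0 then {[]} else {})"
proof -
  have "ts \<in> forests m 0 k \<longleftrightarrow> ts = [] \<and> m = 0 \<and> k = 0" for ts
  proof
    assume ts: "ts \<in> forests m 0 k"
    then have "ts = []"
      by (cases ts) (auto simp: forests_def dest: edges_pos_if_not_leaf)
    with ts show "ts = [] \<and> m = 0 \<and> k = 0" by (simp add: forests_def)
  qed (simp add: forests_def)
  then show ?thesis by auto
qed

lemma young_leaves_Node_snoc:
  "cs \<noteq> [] \<Longrightarrow>
    young_leaves (Node (cs @ [c])) = young_leaves (Node cs) + young_leaves c + (if is_leaf c then 1 else 0)"
  by (cases cs) auto

fun children :: "ptree \<Rightarrow> ptree list" where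
  "children (Node ts) = ts"

lemma children_inject: "children s = children t \<longleftrightarrow> s = t"
  by (cases s; cases t) simp

lemma is_leaf_iff_children_Nil: "is_leaf t \<longleftrightarrow> children t = []"
  by (cases t) simp

fun plant :: "ptree list \<Rightarrow> ptree list" where
  "plant (t # ts) = Node [t] # ts"
| "plant [] = []"

fun add_leaf :: "ptree list \<Rightarrow> ptree list" where
  "add_leaf (t # ts) = Node (children t @ [Node []]) # ts"
| "add_leaf [] = []"

fun graft :: "ptree list \<Rightarrow> ptree list" where
  "graft (c # t # ts) = Node (children t @ [c]) # ts"
| "graft ts = ts"

lemma Cons_edge_in_forests:
  "ts \<in> forests m N k \<Longrightarrow> Node [Node []] # ts \<in> forests (Suc m) (Suc N) k"
  by (simp add: forests_def)

lemma plant_in_forests: "ts \<in> forests (Suc m) N k \<Longrightarrow> plant ts \<in> forests (Suc m) (Suc N) k"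
  by (auto simp: forests_def length_Suc_conv)

lemma add_leaf_in_forests:
  assumes "ts \<in> forests (Suc m) N k"
  shows "add_leaf ts \<in> forests (Suc m) (Suc N) (Suc k)"
proof -
  obtain t ts' where "ts = t # ts'"
    using assms by (auto simp: forests_def length_Suc_conv)
  moreover obtain cs where "t = Node cs" by (cases t)
  moreover have "cs \<noteq> []"
    using assms calculation by (simp add: forests_def)
  then have "young_leaves (Node (cs @ [Node []])) = Suc (young_leaves (Node cs))"
    by (subst young_leaves_Node_snoc) simp_all
  ultimately show ?thesis
    using assms by (simp add: forests_def del: young_leaves.simps)
qed

lemma graft_in_forests:
  assumes "ts \<in> forests (Suc (Suc m)) N k"
  shows "graft ts \<in> forests (Suc m) (Suc N) k"
proof -
  obtain c t ts' where "ts = c # t # ts'"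
    using assms by (auto simp: forests_def length_Suc_conv)
  moreover obtain cs where "t = Node cs" by (cases t)
  moreover have "cs \<noteq> []" "\<not> is_leaf c"
    using assms calculation by (simp_all add: forests_def)
  then have "young_leaves (Node (cs @ [c])) = young_leaves (Node cs) + young_leaves c"
    by (subst young_leaves_Node_snoc) simp_all
  ultimately show ?thesis
    using assms by (simp add: forests_def del: young_leaves.simps)
qed

lemma forests_Suc_cases:
  assumes "ts \<in> forests (Suc m) (Suc N) k"
  obtains (edge) ts' where "ts = Node [Node []] # ts'" "ts' \<in> forests m N k"
  | (plant) ts' where "ts = plant ts'" "ts' \<in> forests (Suc m) N k"
  | (add_leaf) k' ts' where "k = Suc k'" "ts = add_leaf ts'" "ts' \<in> forests (Suc m) N k'"
  | (graft) ts' where "ts = graft ts'" "ts' \<in> forests (Suc (Suc m)) N k"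
proof -
  obtain t ts' where ts: "ts = t # ts'"
    using assms by (auto simp: forests_def length_Suc_conv)
  obtain cs where t: "t = Node cs" by (cases t)
  have "cs \<noteq> []"
    using assms by (simp add: ts t forests_def)
  then obtain ds c where cs: "cs = ds @ [c]"
    by (cases cs rule: rev_cases) auto
  consider "ds = []" "is_leaf c" | "ds = []" "\<not> is_leaf c" | "ds \<noteq> []" "is_leaf c" | "ds \<noteq> []" "\<not> is_leaf c"
    by blast
  then show thesis
  proof cases
    case 1
    then have "c = Node []" by (cases c) simp
    then show thesis
      using edge[of ts'] assms 1 by (simp add: ts t cs forests_def)
  next
    case 2
    then show thesis
      using plant[of "c # ts'"] assms by (simp add: ts t cs forests_def)
  next
    case 3
    then have "c = Node []" by (cases c) simp
    then have "young_leaves t = Suc (young_leaves (Node ds))"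
      unfolding t cs using \<open>ds \<noteq> []\<close> by (subst young_leaves_Node_snoc) simp_all
    moreover have "add_leaf (Node ds # ts') = ts"
      by (simp add: ts t cs \<open>c = Node []\<close>)
    ultimately show thesis
      using add_leaf[of "k - 1" "Node ds # ts'"] assms 3
      by (auto simp: ts t cs \<open>c = Node []\<close> forests_def simp del: young_leaves.simps)
  next
    case 4
    then have "young_leaves t = young_leaves (Node ds) + young_leaves c"
      unfolding t cs by (subst young_leaves_Node_snoc) simp_all
    moreover have "graft (c # Node ds # ts') = ts"
      by (simp add: ts t cs)
    ultimately show thesis
      using graft[of "c # Node ds # ts'"] assms 4
      by (auto simp: ts forests_def simp del: young_leaves.simps)
  qed
qed

lemma forests_Suc_eq:
  "forests (Suc m) (Suc N) k =
     (#) (Node [Node []]) ` forests m N k \<union> plant ` forests (Suc m) N k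
     \<union> add_leaf ` (if k = 0 then {} else forests (Suc m) N (k - 1))
     \<union> graft ` forests (Suc (Suc m)) N k" (is "_ = ?U")
proof
  show "forests (Suc m) (Suc N) k \<subseteq> ?U"
  proof
    fix ts assume "ts \<in> forests (Suc m) (Suc N) k"
    then show "ts \<in> ?U"
      by (cases rule: forests_Suc_cases) auto
  qed
  show "?U \<subseteq> forests (Suc m) (Suc N) k"
    using Cons_edge_in_forests plant_in_forests add_leaf_in_forests[of _ m N "k - 1"]
      graft_in_forests by auto
qed

lemma inj_on_plant: "inj_on plant {ts. ts \<noteq> []}"
  by (rule inj_onI) (auto simp: neq_Nil_conv)

lemma inj_on_add_leaf: "inj_on add_leaf {ts. ts \<noteq> []}"
  by (rule inj_onI) (auto simp: neq_Nil_conv children_inject)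

lemma inj_on_graft: "inj_on graft {ts. 2 \<le> length ts}"
  by (rule inj_onI) (auto simp: numeral_2_eq_2 Suc_le_length_iff children_inject)

lemma card_forests_Suc:
  "card (forests (Suc m) (Suc N) k) =
     card (forests m N k) + card (forests (Suc m) N k)
     + (if k = 0 then 0 else card (forests (Suc m) N (k - 1)))
     + card (forests (Suc (Suc m)) N k)"
proof -
  define A3 where "A3 = (if k = 0 then {} else forests (Suc m) N (k - 1))"
  define X1 where "X1 = (#) (Node [Node []]) ` forests m N k"
  define X2 where "X2 = plant ` forests (Suc m) N k"
  define X3 where "X3 = add_leaf ` A3"
  define X4 where "X4 = graft ` forests (Suc (Suc m)) N k"
  \<comment> \<open>The root of the first tree tells which of the four operations produced a forest.\<close>
  define shape where "shape ts = (length (children (hd ts)) = 1, is_leaf (last (children (hd ts))))"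
    for ts
  have "\<forall>x\<in>X1. shape x = (True, True)"
    by (auto simp: X1_def shape_def)
  moreover have "\<forall>x\<in>X2. shape x = (True, False)"
    by (auto simp: X2_def shape_def forests_def length_Suc_conv)
  moreover have "\<forall>x\<in>X3. shape x = (False, True)"
    by (auto simp: X3_def shape_def A3_def forests_def length_Suc_conv is_leaf_iff_children_Nil
        split: if_splits)
  moreover have "\<forall>x\<in>X4. shape x = (False, False)"
    by (auto simp: X4_def shape_def forests_def length_Suc_conv is_leaf_iff_children_Nil)
  ultimately have "X1 \<inter> X2 = {}" "(X1 \<union> X2) \<inter> X3 = {}" "(X1 \<union> X2 \<union> X3) \<inter> X4 = {}"
    by fastforce+
  moreover have "finite X1" "finite X2" "finite X3" "finite X4"
    by (simp_all add: X1_def X2_def X3_def X4_def A3_def finite_forests)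
  ultimately have "card (X1 \<union> X2 \<union> X3 \<union> X4) = card X1 + card X2 + card X3 + card X4"
    by (simp add: card_Un_disjoint)
  moreover have "forests (Suc m) (Suc N) k = X1 \<union> X2 \<union> X3 \<union> X4"
    unfolding X1_def X2_def X3_def X4_def A3_def by (rule forests_Suc_eq)
  moreover have "forests (Suc m) N k' \<subseteq> {ts. ts \<noteq> []}" for k'
    by (auto simp: forests_def)
  then have "card X2 = card (forests (Suc m) N k)" "card X3 = card A3"
    unfolding X2_def X3_def A3_def
    by (auto intro!: card_image inj_on_subset[OF inj_on_plant] inj_on_subset[OF inj_on_add_leaf])
  moreover have "card X4 = card (forests (Suc (Suc m)) N k)"
    unfolding X4_def
    by (rule card_image, rule inj_on_subset[OF inj_on_graft]) (auto simp: forests_def)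
  ultimately show ?thesis
    by (simp add: X1_def A3_def card_image)
qed

lemma binomial_motzkin_paths_Suc:
  "(Suc L choose k) * motzkin_paths (Suc L - k) h =
     (if h = 0 then 0 else (L choose k) * motzkin_paths (L - k) (h - 1))
     + (L choose k) * motzkin_paths (L - k) h
     + (if k = 0 then 0 else (L choose (k - 1)) * motzkin_paths (L - (k - 1)) h)
     + (L choose k) * motzkin_paths (L - k) (Suc h)"
proof -
  consider "k = 0" | j where "k = Suc j" "j < L" | "k = Suc L" | "Suc L < k"
    using less_linear[of k "Suc L"] by (cases k) auto
  then show ?thesis
  proof cases
    case 1
    then show ?thesis by simp
  next
    case 2
    then have "Suc L - k = Suc (L - k)" "L - j = Suc (L - k)" by auto
    then show ?thesis
      using 2 by (simp add: algebra_simps)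
  next
    case 3
    then show ?thesis by simp
  next
    case 4
    then show ?thesis by (simp add: binomial_eq_0)
  qed
qed

lemma card_forests:
  "card (forests (Suc h) (Suc L) k) = (L choose k) * motzkin_paths (L - k) h"
proof (induction L arbitrary: h k)
  case 0
  then show ?case
    by (simp add: card_forests_Suc forests_0_edges)
next
  case (Suc L)
  have "card (forests h (Suc L) k) = (if h = 0 then 0 else (L choose k) * motzkin_paths (L - k) (h - 1))"
    using Suc.IH by (cases h) (simp_all add: forests_def)
  then show ?case
    unfolding card_forests_Suc[of h "Suc L"] binomial_motzkin_paths_Suc by (simp only: Suc.IH)
qed

lemma card_trees_eq_card_forests:
  assumes "0 < n"
  shows "card {t. edges t = n \<and> young_leaves t = k} = card (forests 1 n k)"
proof -
  have "edges t = 0" if "is_leaf t" for t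
    using that by (cases t) simp
  then have "forests 1 n k = (\<lambda>t. [t]) ` {t. edges t = n \<and> young_leaves t = k}"
    using assms by (auto simp: forests_def length_Suc_conv)
  then show ?thesis
    by (simp add: card_image inj_on_def)
qed

theorem mainTheorem4:
  fixes n k :: nat
  assumes "1 \<le> n" and "k \<le> n - 1"
  shows "card {t. edges t = n \<and> young_leaves t = k}
           = (n - 1 choose k) * motzkin (n - k - 1)"
proof -
  obtain L where n: "n = Suc L"
    using assms(1) by (cases n) auto
  then have "card {t. edges t = n \<and> young_leaves t = k} = card (forests 1 (Suc L) k)"
    by (simp add: card_trees_eq_card_forests)
  also have "\<dots> = (L choose k) * motzkin (L - k)"
    using card_forests[of 0 L k] by (simp add: motzkin_paths_motzkin)
  finally show ?thesis
    using n by simp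
qed

end
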